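(* Let $n\geq 2$ and let $G_n$ be the graph whose vertices are the permutations of $[n]$, with $\sigma$ and $\tau$ adjacent iff there is no $k\in[n-1]$ with $\sigma^{-1}([k])=\tau^{-1}([k])$. Then $\chi(G_n)=n$ and the independence number of $G_n$ is $(n-1)!$. Moreover, if $\rho$ is the cyclic permutation $\rho(i)\equiv i+1 \pmod n$ and $H=\langle\rho\rangle$, then each right coset $H\sigma$ is a clique of size $n$ in $G_n$, so the vertex set of $G_n$ is partitioned into $(n-1)!$ cliques of size $n$.
   Context: $G_n$ is the Kneser graph of the permutohedron $\mathrm{Perm}_{n-1}$ (the convex hull of the permutations of $[n]$ as points of $\mathbb{R}^n$): its vertices are permutations, and two vertices are adjacent iff no facet of the permutohedron contains both; the facets correspond to nonempty proper subsets $S\subsetneq[n]$, the facet for $S$ containing exactly the permutations $\sigma$ with $\sigma(S)=[|S|]$. The claim is stated directly in terms of the combinatorial adjacency rule given. *)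

theory Defs
  imports Main "HOL-Combinatorics.Permutations"
begin

definition proper_colouring :: "'a set \<Rightarrow> ('a \<Rightarrow> 'a \<Rightarrow> bool) \<Rightarrow> nat \<Rightarrow> ('a \<Rightarrow> nat) \<Rightarrow> bool" where
  "proper_colouring V E k c \<longleftrightarrow>
     (\<forall>v\<in>V. c v < k) \<and> (\<forall>u\<in>V. \<forall>v\<in>V. E u v \<longrightarrow> c u \<noteq> c v)"

definition chromatic_number :: "'a set \<Rightarrow> ('a \<Rightarrow> 'a \<Rightarrow> bool) \<Rightarrow> nat" where
  "chromatic_number V E = (LEAST k. \<exists>c. proper_colouring V E k c)"

definition independent_set :: "'a set \<Rightarrow> ('a \<Rightarrow> 'a \<Rightarrow> bool) \<Rightarrow> 'a set \<Rightarrow> bool" where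
  "independent_set V E S \<longleftrightarrow> S \<subseteq> V \<and> (\<forall>u\<in>S. \<forall>v\<in>S. \<not> E u v)"

definition independence_number :: "'a set \<Rightarrow> ('a \<Rightarrow> 'a \<Rightarrow> bool) \<Rightarrow> nat" where
  "independence_number V E = Max (card ` {S. independent_set V E S})"

definition clique :: "'a set \<Rightarrow> ('a \<Rightarrow> 'a \<Rightarrow> bool) \<Rightarrow> 'a set \<Rightarrow> bool" where
  "clique V E S \<longleftrightarrow> S \<subseteq> V \<and> (\<forall>u\<in>S. \<forall>v\<in>S. u \<noteq> v \<longrightarrow> E u v)"

definition perm_vertices :: "nat \<Rightarrow> (nat \<Rightarrow> nat) set" where
  "perm_vertices n = {\<sigma>. \<sigma> permutes {1..n}}"

definition preim :: "nat \<Rightarrow> (nat \<Rightarrow> nat) \<Rightarrow> nat \<Rightarrow> nat set" where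
  "preim n \<sigma> k = {i \<in> {1..n}. \<sigma> i \<in> {1..k}}"

definition G_adj :: "nat \<Rightarrow> (nat \<Rightarrow> nat) \<Rightarrow> (nat \<Rightarrow> nat) \<Rightarrow> bool" where
  "G_adj n \<sigma> \<tau> \<longleftrightarrow> \<not> (\<exists>k\<in>{1..n-1}. preim n \<sigma> k = preim n \<tau> k)"

definition rho :: "nat \<Rightarrow> nat \<Rightarrow> nat" where
  "rho n i = (if i \<in> {1..n} then i mod n + 1 else i)"

text \<open>Right coset H\<sigma> of H = \<langle>\<rho>\<rangle>, products composed as functions
((\<rho>\<sigma>)(i) = \<rho>(\<sigma>(i))).\<close>
definition right_coset :: "nat \<Rightarrow> (nat \<Rightarrow> nat) \<Rightarrow> (nat \<Rightarrow> nat) set" where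
  "right_coset n \<sigma> = {(rho n ^^ j) \<circ> \<sigma> | j. j < n}"

end

(*
  Colour a permutation s by s^-1(1): since s^-1([1]) = {s^-1(1)}, permutations of the same
  colour are never adjacent, so n colours suffice. Conversely the n permutations rho^j s of a
  right coset are pairwise adjacent: for j1 < j2 < n and 1 <= k < n some m satisfies
  rho^j1(m) <= k < rho^j2(m), so the preimages of [k] differ at s^-1(m). The n!/n = (n-1)!
  cosets are therefore disjoint cliques covering all vertices; an independent set meets each
  of them at most once, and the permutations fixing 1 form an independent set of that size.
*)
theory Submission
  imports Defs "HOL-Combinatorics.Cycles"
begin

lemma card_clique_le_colours:
  assumes "proper_colouring V E k c" "clique V E K"
  shows "card K \<le> k"
proof -
  have "inj_on c K"
  proof (rule inj_onI)
    fix u v assume "u \<in> K" "v \<in> K" "c u = c v"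
    then show "u = v"
      using assms unfolding proper_colouring_def clique_def by blast
  qed
  moreover have "c ` K \<subseteq> {..<k}"
    using assms unfolding proper_colouring_def clique_def by auto
  ultimately show ?thesis
    using card_inj_on_le[of c K "{..<k}"] by simp
qed

lemma chromatic_number_eqI:
  assumes "proper_colouring V E k c" "clique V E K" "card K = k"
  shows "chromatic_number V E = k"
  unfolding chromatic_number_def
proof (rule Least_equality)
  show "\<exists>c. proper_colouring V E k c" using assms(1) by blast
  show "k \<le> m" if colourable: "\<exists>c. proper_colouring V E m c" for m
  proof -
    obtain d where "proper_colouring V E m d" using colourable by blast
    from card_clique_le_colours[OF this assms(2)] show ?thesis using assms(3) by simp
  qed
qed

lemma card_independent_set_le_clique_cover:
  assumes S: "independent_set V E S" and "finite P" "V \<subseteq> \<Union>P"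
    and cliques: "\<And>C. C \<in> P \<Longrightarrow> clique V E C"
  shows "card S \<le> card P"
proof -
  have meet: "card (S \<inter> C) \<le> 1" if "C \<in> P" for C
  proof (cases "finite (S \<inter> C)")
    case True
    have "\<forall>u\<in>S \<inter> C. \<forall>v\<in>S \<inter> C. u = v"
      using S cliques[OF that] unfolding independent_set_def clique_def by blast
    then show ?thesis using card_le_Suc0_iff_eq[OF True] by simp
  qed simp
  have "S \<subseteq> \<Union>P"
    using S \<open>V \<subseteq> \<Union>P\<close> unfolding independent_set_def by auto
  then have "S = (\<Union>C\<in>P. S \<inter> C)" by auto
  then have "card S \<le> (\<Sum>C\<in>P. card (S \<inter> C))"
    using card_UN_le[OF \<open>finite P\<close>, of "\<lambda>C. S \<inter> C"] by simp
  also have "\<dots> \<le> (\<Sum>C\<in>P. 1)"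
    by (rule sum_mono) (rule meet)
  finally show ?thesis by simp
qed

lemma independence_number_eqI:
  assumes "finite V" "independent_set V E S" "card S = card P"
    and "finite P" "V \<subseteq> \<Union>P" "\<And>C. C \<in> P \<Longrightarrow> clique V E C"
  shows "independence_number V E = card P"
  unfolding independence_number_def
proof (rule Max_eqI)
  have "{S. independent_set V E S} \<subseteq> Pow V"
    unfolding independent_set_def by auto
  then show "finite (card ` {S. independent_set V E S})"
    using \<open>finite V\<close> finite_subset by blast
  show "y \<le> card P" if y: "y \<in> card ` {S. independent_set V E S}" for y
  proof -
    obtain T where "independent_set V E T" "y = card T" using y by blast
    then show ?thesis using card_independent_set_le_clique_cover[OF _ assms(4-6)] by simp
  qed
  show "card P \<in> card ` {S. independent_set V E S}"
    using assms(2,3) by (intro image_eqI[of _ _ S]) simp_all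
qed

lemma funpow_rho:
  assumes "i \<in> {1..n}"
  shows "(rho n ^^ j) i = (i - 1 + j) mod n + 1"
proof (induction j)
  case 0
  then show ?case using assms by auto
next
  case (Suc j)
  have "(i - 1 + j) mod n < n" using assms by simp
  then have "(rho n ^^ Suc j) i = Suc ((i - 1 + j) mod n) mod n + 1"
    by (simp add: Suc rho_def)
  also have "\<dots> = (i - 1 + Suc j) mod n + 1" by (simp add: mod_Suc_eq)
  finally show ?case .
qed

lemma funpow_rho_outside:
  assumes "i \<notin> {1..n}"
  shows "(rho n ^^ j) i = i"
  by (induction j) (use assms in \<open>auto simp: rho_def\<close>)

lemma funpow_rho_mod: "rho n ^^ j = rho n ^^ (j mod n)"
proof
  fix i
  show "(rho n ^^ j) i = (rho n ^^ (j mod n)) i"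
  proof (cases "i \<in> {1..n}")
    case True
    have "(i - 1 + j) mod n = (i - 1 + j mod n) mod n" by (rule mod_add_right_eq[symmetric])
    then show ?thesis by (simp only: funpow_rho[OF True])
  qed (simp add: funpow_rho_outside)
qed

lemma rho_permutes: "rho n permutes {1..n}"
proof (rule bij_imp_permutes)
  have inj: "inj_on (rho n) {1..n}"
  proof (rule inj_onI)
    fix a b assume ab: "a \<in> {1..n}" "b \<in> {1..n}" "rho n a = rho n b"
    then have "a mod n = b mod n" by (simp add: rho_def)
    with ab show "a = b"
      by (metis atLeastAtMost_iff le_neq_implies_less mod_less mod_self not_one_le_zero)
  qed
  moreover have "rho n ` {1..n} \<subseteq> {1..n}"
    by (auto simp: rho_def Suc_le_eq)
  ultimately show "bij_betw (rho n) {1..n} {1..n}"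
    by (simp add: bij_betw_def endo_inj_surj)
  show "rho n x = x" if "x \<notin> {1..n}" for x
    using that by (auto simp: rho_def)
qed

lemma mem_right_coset_iff:
  assumes "n \<ge> 1"
  shows "\<tau> \<in> right_coset n \<sigma> \<longleftrightarrow> (\<exists>j. \<tau> = (rho n ^^ j) \<circ> \<sigma>)"
proof
  assume "\<exists>j. \<tau> = (rho n ^^ j) \<circ> \<sigma>"
  then obtain j where "\<tau> = (rho n ^^ (j mod n)) \<circ> \<sigma>"
    using funpow_rho_mod by metis
  moreover have "j mod n < n" using assms by simp
  ultimately show "\<tau> \<in> right_coset n \<sigma>" unfolding right_coset_def by blast
qed (auto simp: right_coset_def)

lemma right_coset_self:
  assumes "n \<ge> 1"
  shows "\<sigma> \<in> right_coset n \<sigma>"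
proof -
  have "\<sigma> = (rho n ^^ 0) \<circ> \<sigma>" by simp
  then show ?thesis using mem_right_coset_iff[OF assms] by blast
qed

lemma right_coset_subset_perm_vertices:
  assumes "\<sigma> \<in> perm_vertices n"
  shows "right_coset n \<sigma> \<subseteq> perm_vertices n"
  using assms permutes_compose[OF _ permutes_funpow[OF rho_permutes]]
  by (auto simp: right_coset_def perm_vertices_def)

lemma right_coset_eq:
  assumes "n \<ge> 1" "\<tau> \<in> right_coset n \<sigma>"
  shows "right_coset n \<tau> = right_coset n \<sigma>"
proof -
  have shift: "right_coset n \<beta> \<subseteq> right_coset n \<alpha>" if \<beta>: "\<beta> = (rho n ^^ j) \<circ> \<alpha>" for \<alpha> \<beta> j
  proof
    fix x assume "x \<in> right_coset n \<beta>"
    then obtain a where "x = (rho n ^^ a) \<circ> \<beta>"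
      using mem_right_coset_iff[OF assms(1)] by blast
    then have "x = (rho n ^^ (a + j)) \<circ> \<alpha>"
      by (simp add: \<beta> funpow_add o_assoc)
    then show "x \<in> right_coset n \<alpha>"
      using mem_right_coset_iff[OF assms(1)] by blast
  qed
  obtain j where j: "\<tau> = (rho n ^^ j) \<circ> \<sigma>"
    using assms mem_right_coset_iff by blast
  have "rho n ^^ ((n - 1) * j) \<circ> rho n ^^ j = rho n ^^ (n * j)"
    using assms(1) by (simp add: funpow_add[symmetric] algebra_simps)
  also have "\<dots> = id"
    using funpow_rho_mod[where j = "n * j"] by simp
  finally have "\<sigma> = (rho n ^^ ((n - 1) * j)) \<circ> \<tau>"
    by (simp add: j o_assoc)
  then show ?thesis
    using shift j by blast
qed

lemma funpow_rho_separates_initial_segment: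
  assumes "j1 < j2" "j2 < n" "1 \<le> k" "k < n"
  shows "\<exists>m\<in>{1..n}. (rho n ^^ j1) m \<le> k \<and> k < (rho n ^^ j2) m"
proof -
  define d where "d = j2 - j1"
  define y where "y = k - d"
  \<comment> \<open>\<open>\<rho>\<^bsup>j1\<^esup>\<close> sends \<open>m\<close> to \<open>y + 1 \<le> k\<close>, and \<open>\<rho>\<^bsup>j2\<^esup>\<close> moves it \<open>d\<close> steps further, past \<open>k\<close>\<close>
  define m where "m = (y + n - j1) mod n + 1"
  have y: "y < k" "k \<le> y + d" "y + d < n"
    using assms unfolding y_def d_def by auto
  have m: "m \<in> {1..n}"
    using assms by (simp add: m_def Suc_le_eq)
  have "(m - 1 + j1) mod n = (y + n - j1 + j1) mod n"
    by (simp add: m_def mod_add_left_eq)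
  also have "\<dots> = y"
    using assms y by simp
  finally have j1: "(rho n ^^ j1) m = y + 1"
    by (simp add: funpow_rho[OF m])
  have "(m - 1 + j2) mod n = (y + n - j1 + j2) mod n"
    by (simp add: m_def mod_add_left_eq)
  also have "y + n - j1 + j2 = y + d + n"
    using assms unfolding d_def by arith
  also have "(y + d + n) mod n = y + d"
    using y by simp
  finally have j2: "(rho n ^^ j2) m = y + d + 1"
    by (simp add: funpow_rho[OF m])
  have "(rho n ^^ j1) m \<le> k \<and> k < (rho n ^^ j2) m"
    using j1 j2 y by simp
  then show ?thesis
    using m by blast
qed

lemma preim_funpow_rho_comp_neq:
  assumes "\<sigma> permutes {1..n}" "j1 < j2" "j2 < n" "k \<in> {1..n-1}"
  shows "preim n ((rho n ^^ j1) \<circ> \<sigma>) k \<noteq> preim n ((rho n ^^ j2) \<circ> \<sigma>) k"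
proof -
  have "1 \<le> k" "k < n"
    using assms(4) by auto
  then obtain m where m: "m \<in> {1..n}" "(rho n ^^ j1) m \<le> k" "k < (rho n ^^ j2) m"
    using funpow_rho_separates_initial_segment[OF assms(2,3)] by blast
  obtain i where "i \<in> {1..n}" "\<sigma> i = m"
    using m(1) permutes_image[OF assms(1)] by (metis imageE)
  moreover have "1 \<le> (rho n ^^ j1) m"
    using m(1) by (simp add: funpow_rho)
  ultimately have "i \<in> preim n ((rho n ^^ j1) \<circ> \<sigma>) k" "i \<notin> preim n ((rho n ^^ j2) \<circ> \<sigma>) k"
    using m by (auto simp: preim_def)
  then show ?thesis by blast
qed

lemma G_adj_funpow_rho_comp:
  assumes "\<sigma> permutes {1..n}" "j1 \<noteq> j2" "j1 < n" "j2 < n"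
  shows "G_adj n ((rho n ^^ j1) \<circ> \<sigma>) ((rho n ^^ j2) \<circ> \<sigma>)"
proof (cases "j1 < j2")
  case True
  then show ?thesis
    using preim_funpow_rho_comp_neq[OF assms(1) True assms(4)] by (auto simp: G_adj_def)
next
  case False
  then have "j2 < j1" using assms(2) by simp
  then show ?thesis
    using preim_funpow_rho_comp_neq[OF assms(1) _ assms(3)] by (fastforce simp: G_adj_def)
qed

lemma right_coset_clique:
  assumes "\<sigma> \<in> perm_vertices n"
  shows "clique (perm_vertices n) (G_adj n) (right_coset n \<sigma>)"
  unfolding clique_def
proof (intro conjI ballI impI)
  show "right_coset n \<sigma> \<subseteq> perm_vertices n"
    using right_coset_subset_perm_vertices[OF assms] .
  fix u v assume "u \<in> right_coset n \<sigma>" "v \<in> right_coset n \<sigma>" "u \<noteq> v"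
  then obtain a b where "u = (rho n ^^ a) \<circ> \<sigma>" "v = (rho n ^^ b) \<circ> \<sigma>" "a \<noteq> b" "a < n" "b < n"
    unfolding right_coset_def by blast
  then show "G_adj n u v"
    using G_adj_funpow_rho_comp assms by (simp add: perm_vertices_def)
qed

lemma card_right_coset:
  assumes "n \<ge> 2" "\<sigma> \<in> perm_vertices n"
  shows "card (right_coset n \<sigma>) = n"
proof -
  have irrefl: "\<not> G_adj n \<tau> \<tau>" for \<tau>
    using assms(1) by (auto simp: G_adj_def)
  have "inj_on (\<lambda>j. (rho n ^^ j) \<circ> \<sigma>) {..<n}"
    using G_adj_funpow_rho_comp[of \<sigma> n] irrefl assms(2)
    by (intro inj_onI) (metis lessThan_iff mem_Collect_eq perm_vertices_def)
  moreover have "right_coset n \<sigma> = (\<lambda>j. (rho n ^^ j) \<circ> \<sigma>) ` {..<n}"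
    unfolding right_coset_def by auto
  ultimately show ?thesis
    by (simp add: card_image)
qed

lemma Union_right_cosets:
  assumes "n \<ge> 1"
  shows "\<Union> (right_coset n ` perm_vertices n) = perm_vertices n"
  using right_coset_subset_perm_vertices right_coset_self[OF assms] by blast

lemma right_cosets_disjoint:
  assumes "n \<ge> 1" "C1 \<in> right_coset n ` perm_vertices n" "C2 \<in> right_coset n ` perm_vertices n"
    "C1 \<noteq> C2"
  shows "C1 \<inter> C2 = {}"
  using assms right_coset_eq by blast

lemma card_perm_vertices: "card (perm_vertices n) = fact n"
  unfolding perm_vertices_def by (rule card_permutations) simp_all

lemma finite_perm_vertices: "finite (perm_vertices n)"
  unfolding perm_vertices_def by (rule finite_permutations) simp

lemma card_right_cosets:
  assumes "n \<ge> 2"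
  shows "card (right_coset n ` perm_vertices n) = fact (n - 1)"
proof -
  have "n * card (right_coset n ` perm_vertices n) = card (\<Union> (right_coset n ` perm_vertices n))"
  proof (rule card_partition)
    show "finite (right_coset n ` perm_vertices n)"
      using finite_perm_vertices by simp
    show "finite (\<Union> (right_coset n ` perm_vertices n))"
      using assms finite_perm_vertices by (simp add: Union_right_cosets)
    show "card C = n" if "C \<in> right_coset n ` perm_vertices n" for C
      using that assms card_right_coset by blast
    show "C1 \<inter> C2 = {}" if "C1 \<in> right_coset n ` perm_vertices n"
      "C2 \<in> right_coset n ` perm_vertices n" "C1 \<noteq> C2" for C1 C2
      using that assms by (intro right_cosets_disjoint) simp_all
  qed
  also have "\<dots> = card (perm_vertices n)"
    using assms by (simp add: Union_right_cosets)
  also have "\<dots> = n * fact (n - 1)"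
    using assms by (simp add: card_perm_vertices fact_reduce)
  finally show ?thesis
    using assms by simp
qed

lemma preim_one:
  assumes "\<sigma> permutes {1..n}" "n \<ge> 1"
  shows "preim n \<sigma> 1 = {inv \<sigma> 1}"
proof -
  have "inv \<sigma> 1 \<in> {1..n}"
    using assms permutes_in_image[OF permutes_inv[OF assms(1)]] by simp
  moreover have "\<sigma> i = 1 \<longleftrightarrow> i = inv \<sigma> 1" for i
    using permutes_inverses[OF assms(1)] by metis
  ultimately show ?thesis
    unfolding preim_def by auto
qed

lemma not_G_adj_if_inv_one_eq:
  assumes "n \<ge> 2" "\<sigma> permutes {1..n}" "\<tau> permutes {1..n}" "inv \<sigma> 1 = inv \<tau> 1"
  shows "\<not> G_adj n \<sigma> \<tau>"
proof -
  have "preim n \<sigma> 1 = preim n \<tau> 1"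
    using preim_one[OF assms(2)] preim_one[OF assms(3)] assms(1,4) by simp
  moreover have "(1::nat) \<in> {1..n-1}"
    using assms(1) by simp
  ultimately show ?thesis
    unfolding G_adj_def by blast
qed

lemma proper_colouring_inv_one:
  assumes "n \<ge> 2"
  shows "proper_colouring (perm_vertices n) (G_adj n) n (\<lambda>\<sigma>. inv \<sigma> 1 - 1)"
proof -
  have range: "inv \<sigma> 1 \<in> {1..n}" if "\<sigma> \<in> perm_vertices n" for \<sigma>
    using that assms permutes_in_image[OF permutes_inv, of \<sigma> "{1..n}" 1]
    by (simp add: perm_vertices_def)
  show ?thesis
    unfolding proper_colouring_def
  proof (intro conjI ballI impI)
    show "inv \<sigma> 1 - 1 < n" if "\<sigma> \<in> perm_vertices n" for \<sigma>
      using range[OF that] by auto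
    fix \<sigma> \<tau> assume \<sigma>\<tau>: "\<sigma> \<in> perm_vertices n" "\<tau> \<in> perm_vertices n" "G_adj n \<sigma> \<tau>"
    then have "inv \<sigma> 1 \<noteq> inv \<tau> 1"
      using not_G_adj_if_inv_one_eq[OF assms] by (auto simp: perm_vertices_def)
    moreover have "inv \<sigma> 1 \<ge> 1" "inv \<tau> 1 \<ge> 1"
      using range \<sigma>\<tau>(1,2) by auto
    ultimately show "inv \<sigma> 1 - 1 \<noteq> inv \<tau> 1 - 1"
      by linarith
  qed
qed

lemma independent_set_permutes_fixing_one:
  assumes "n \<ge> 2"
  shows "independent_set (perm_vertices n) (G_adj n) {\<sigma>. \<sigma> permutes {2..n}}"
proof -
  have perm: "\<sigma> permutes {1..n}" and fix1: "inv \<sigma> 1 = 1" if "\<sigma> permutes {2..n}" for \<sigma>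
    using permutes_subset[OF that] permutes_not_in[OF permutes_inv[OF that]] by auto
  show ?thesis
    unfolding independent_set_def
    using not_G_adj_if_inv_one_eq[OF assms] perm fix1 by (auto simp: perm_vertices_def)
qed

theorem mainTheorem17:
  fixes n :: nat
  assumes "n \<ge> 2"
  shows "chromatic_number (perm_vertices n) (G_adj n) = n \<and>
         independence_number (perm_vertices n) (G_adj n) = fact (n - 1) \<and>
         (\<forall>\<sigma>\<in>perm_vertices n.
            clique (perm_vertices n) (G_adj n) (right_coset n \<sigma>) \<and>
            card (right_coset n \<sigma>) = n) \<and>
         \<Union> (right_coset n ` perm_vertices n) = perm_vertices n \<and>
         (\<forall>C1\<in>right_coset n ` perm_vertices n. \<forall>C2\<in>right_coset n ` perm_vertices n.
            C1 \<noteq> C2 \<longrightarrow> C1 \<inter> C2 = {}) \<and>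
         card (right_coset n ` perm_vertices n) = fact (n - 1)"
proof -
  have n: "n \<ge> 1" using assms by simp
  have id: "id \<in> perm_vertices n"
    by (simp add: perm_vertices_def)
  have cosets: "\<forall>\<sigma>\<in>perm_vertices n. clique (perm_vertices n) (G_adj n) (right_coset n \<sigma>) \<and>
      card (right_coset n \<sigma>) = n"
    using right_coset_clique card_right_coset[OF assms] by blast
  have "card {\<sigma>. \<sigma> permutes {2..n}} = card (right_coset n ` perm_vertices n)"
    using card_right_cosets[OF assms] by (simp add: card_permutations)
  then have "independence_number (perm_vertices n) (G_adj n) = card (right_coset n ` perm_vertices n)"
    using finite_perm_vertices Union_right_cosets[OF n] right_coset_clique
    by (intro independence_number_eqI[OF finite_perm_vertices
        independent_set_permutes_fixing_one[OF assms]]) auto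
  moreover have "chromatic_number (perm_vertices n) (G_adj n) = n"
    using chromatic_number_eqI[OF proper_colouring_inv_one[OF assms] right_coset_clique[OF id]]
      card_right_coset[OF assms id] by simp
  ultimately show ?thesis
    using cosets Union_right_cosets[OF n] right_cosets_disjoint[OF n] card_right_cosets[OF assms]
    by simp
qed

end
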